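(* If seven distinct points of $\mathcal O_1$ are contained in a $4$-dimensional projective subspace of $\mathrm{PG}(U_1)$, then four of them are contained in a twisted cubic of $\mathcal O_1$, i.e. in $\theta(L)$ for some $q$-order subline $L$ of $\mathrm{PG}(1,q^3)$.
   Context: $q$ is a prime power. Let $U_1\subset\mathbb F_{q^3}^8$ be the set of vectors $(a,b^{q^2},b^{q},c,b,c^{q},c^{q^2},d)$ with $a,d\in\mathbb F_q$, $b,c\in\mathbb F_{q^3}$; it is an $8$-dimensional $\mathbb F_q$-vector space, so $\mathrm{PG}(U_1)\cong\mathrm{PG}(7,q)$. For $(a,b,c,d)\ne 0$ let $P(a,b,c,d)$ be the point of $\mathrm{PG}(U_1)$ spanned by this vector. Let $\mathcal O_1=\{P(1,t,t^{q^2+q},t^{q^2+q+1}) : t\in\mathbb F_{q^3}\}\cup\{P(0,0,0,1)\}$. Let $\theta:\mathrm{PG}(1,q^3)\to\mathcal O_1$ be the bijection $\langle(1,t)\rangle\mapsto P(1,t,t^{q^2+q},t^{q^2+q+1})$, $\langle(0,1)\rangle\mapsto P(0,0,0,1)$. A $q$-order subline of $\mathrm{PG}(1,q^3)$ is the image of $\mathrm{PG}(1,q)=\{\langle(1,t)\rangle:t\in\mathbb F_q\}\cup\{\langle(0,1)\rangle\}$ under an element of $\mathrm{PGL}(2,q^3)$; equivalently, four distinct points of $\mathrm{PG}(1,q^3)$ lie in a common $q$-order subline iff their cross-ratio lies in $\mathbb F_q$. The sets $\theta(L)$, $L$ a $q$-order subline, are twisted cubics, called the twisted cubics of $\mathcal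 O_1$. *)

theory Defs
  imports Main "HOL-Computational_Algebra.Primes"
begin

text \<open>The ambient field is a finite field 'a with q^3 elements, modelling F_{q^3}.
  F_q is its subfield of elements fixed by x \<mapsto> x^q.\<close>

definition Fq :: "nat \<Rightarrow> 'a::field set" where
  "Fq q = {x. x ^ q = x}"

text \<open>Vectors of F_{q^3}^8 are functions nat \<Rightarrow> 'a, with coordinates 0..7 (zero elsewhere).\<close>

definition u1vec :: "nat \<Rightarrow> 'a::field \<Rightarrow> 'a \<Rightarrow> 'a \<Rightarrow> 'a \<Rightarrow> nat \<Rightarrow> 'a" where
  "u1vec q a b c d = (\<lambda>k. if k < 8 then
      [a, b ^ (q^2), b ^ q, c, b, c ^ q, c ^ (q^2), d] ! k else 0)"

definition U1 :: "nat \<Rightarrow> (nat \<Rightarrow> 'a::field) set" where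
  "U1 q = {u1vec q a b c d | a b c d. a \<in> Fq q \<and> d \<in> Fq q}"

definition pt :: "nat \<Rightarrow> (nat \<Rightarrow> 'a::field) \<Rightarrow> (nat \<Rightarrow> 'a) set" where
  "pt q v = {(\<lambda>k. l * v k) | l. l \<in> Fq q}"

definition P :: "nat \<Rightarrow> 'a::field \<Rightarrow> 'a \<Rightarrow> 'a \<Rightarrow> 'a \<Rightarrow> (nat \<Rightarrow> 'a) set" where
  "P q a b c d = pt q (u1vec q a b c d)"

definition O1 :: "nat \<Rightarrow> (nat \<Rightarrow> 'a::field) set set" where
  "O1 q = {P q 1 t (t ^ (q^2 + q)) (t ^ (q^2 + q + 1)) | t. True} \<union> {P q 0 0 0 1}"

text \<open>F_q-subspaces of U_1 of (vector) dimension n, i.e. projective dimension n-1: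
  spans of n F_q-linearly independent vectors of U_1.\<close>

definition Fq_lincomb :: "nat \<Rightarrow> (nat \<Rightarrow> 'a::field) \<Rightarrow> (nat \<Rightarrow> nat \<Rightarrow> 'a) \<Rightarrow> nat \<Rightarrow> 'a" where
  "Fq_lincomb n l w = (\<lambda>k. \<Sum>j<n. l j * w j k)"

definition U1_subspace_dim :: "nat \<Rightarrow> nat \<Rightarrow> (nat \<Rightarrow> 'a::field) set \<Rightarrow> bool" where
  "U1_subspace_dim q n W \<longleftrightarrow>
     (\<exists>w. (\<forall>j<n. w j \<in> U1 q)
        \<and> (\<forall>l. (\<forall>j<n. l j \<in> Fq q) \<and> Fq_lincomb n l w = (\<lambda>k. 0) \<longrightarrow> (\<forall>j<n. l j = 0))
        \<and> W = {Fq_lincomb n l w | l. \<forall>j<n. l j \<in> Fq q})"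

definition proj1 :: "'a::field \<Rightarrow> 'a \<Rightarrow> ('a \<times> 'a) set" where
  "proj1 x y = {(l * x, l * y) | l. True}"

definition PG1 :: "('a::field \<times> 'a) set set" where
  "PG1 = {proj1 x y | x y. (x, y) \<noteq> (0, 0)}"

definition PG1q :: "nat \<Rightarrow> ('a::field \<times> 'a) set set" where
  "PG1q q = {proj1 1 t | t. t \<in> Fq q} \<union> {proj1 0 1}"

definition pgl_act :: "'a::field \<Rightarrow> 'a \<Rightarrow> 'a \<Rightarrow> 'a \<Rightarrow> ('a \<times> 'a) set \<Rightarrow> ('a \<times> 'a) set" where
  "pgl_act al be ga de p = (\<lambda>(x, y). (al * x + be * y, ga * x + de * y)) ` p"

definition q_subline :: "nat \<Rightarrow> ('a::field \<times> 'a) set set \<Rightarrow> bool" where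
  "q_subline q L \<longleftrightarrow> (\<exists>al be ga de. al * de - be * ga \<noteq> 0 \<and> L = pgl_act al be ga de ` PG1q q)"

definition theta :: "nat \<Rightarrow> ('a::field \<times> 'a) set \<Rightarrow> (nat \<Rightarrow> 'a) set" where
  "theta q p = (if \<exists>t. p = proj1 1 t
      then (let t = (THE t. p = proj1 1 t) in P q 1 t (t ^ (q^2 + q)) (t ^ (q^2 + q + 1)))
      else P q 0 0 0 1)"

end

theory Submission
  imports Defs "HOL-Number_Theory.Residues" "HOL-Library.FuncSet"
begin

text \<open>Writing \<open>\<sigma>\<close> for \<open>x \<mapsto> x\<^sup>q\<close>, the point of \<open>\<O>\<^sub>1\<close> with parameter \<open>u = (x, y)\<close> is spanned by the
  tensor \<open>u \<otimes> u\<^sup>\<sigma> \<otimes> u\<^sup>\<sigma>\<^sup>2\<close>. Six vectors in a 5-dimensional \<open>\<bbbF>\<^sub>q\<close>-space are dependent, so the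
  seven points give \<open>\<bbbF>\<^sub>q\<close>-relations among the tensors of \<open>u\<^sub>0, \<dots>, u\<^sub>5\<close> and of \<open>u\<^sub>1, \<dots>, u\<^sub>6\<close>.
  Contracting the first tensor factor with \<open>det(u\<^sub>0, -)\<close>, resp. \<open>det(u\<^sub>6, -)\<close>, turns them into two
  relations among \<open>u\<^sub>i\<^sup>\<sigma> \<otimes> u\<^sub>i\<^sup>\<sigma>\<^sup>2\<close>, \<open>1 \<le> i \<le> 5\<close>. Eliminating \<open>u\<^sub>1\<close> leaves either a
  nontrivial relation among four of these tensors, and contracting it in both factors shows that
  the cross ratio of the four parameters is fixed by \<open>\<sigma>\<close>, or two proportional relations, whose
  coefficient ratio exhibits \<open>cr(u\<^sub>0, u\<^sub>6; u\<^sub>2, u\<^sub>1)\<close> as an element of \<open>\<bbbF>\<^sub>q\<close>. Four points of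
  \<open>PG(1, q\<^sup>3)\<close> with cross ratio in \<open>\<bbbF>\<^sub>q\<close> lie on a \<open>q\<close>-order subline.\<close>

section \<open>The Frobenius map of a cubic extension\<close>

text \<open>The library's \<open>finite_field_power_card_eq_same\<close> is stated for the class \<open>finite_field\<close>,
  which \<open>{finite, field}\<close> is not known to be an instance of.\<close>

lemma power_card_UNIV_eq:
  fixes x :: "'a::{finite,field}"
  shows "x ^ card (UNIV :: 'a set) = x"
proof (cases "x = 0")
  case False
  let ?U = "UNIV - {0::'a}"
  have "(*) x ` ?U = ?U"
  proof (intro equalityI subsetI)
    fix y assume "y \<in> ?U"
    then show "y \<in> (*) x ` ?U"
      using False by (intro image_eqI[of _ _ "y / x"]) auto
  qed (use False in auto)
  then have "prod id ?U = prod id ((*) x ` ?U)"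
    by simp
  also have "\<dots> = prod ((*) x) ?U"
    using False by (simp add: prod.reindex inj_on_def)
  also have "\<dots> = x ^ card ?U * prod id ?U"
    by (simp add: prod.distrib)
  finally have "x ^ card ?U = 1"
    by simp
  moreover have "card (UNIV :: 'a set) = Suc (card ?U)"
    using card_Diff_singleton_if[of UNIV "0::'a"] finite_UNIV_card_ge_0[where ?'a = 'a] by simp
  ultimately show ?thesis
    by (simp only: power_Suc mult_1_right)
qed (simp add: finite_UNIV_card_ge_0)

lemma CHAR_eq_prime_of_card:
  assumes "prime p" "card (UNIV :: 'a::{finite,field} set) = p ^ n"
  shows "CHAR('a) = p"
proof -
  have "prime CHAR('a)"
    by (rule prime_CHAR_semidom) (simp add: finite_imp_CHAR_pos)
  moreover have "CHAR('a) dvd p ^ n"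
    using CHAR_dvd_CARD[where 'a = 'a] assms(2) by simp
  ultimately show ?thesis
    using assms(1) by (metis prime_dvd_power primes_dvd_imp_eq)
qed

text \<open>\<open>frob\<close> is always \<open>\<lambda>x. x ^ q\<close>; it is a parameter only so that the locale fixes the type \<open>'a\<close>.\<close>

locale cubic_frobenius =
  fixes q :: nat and frob :: "'a::field \<Rightarrow> 'a"
  assumes frob_eq: "frob x = x ^ q"
    and frob_add: "frob (x + y) = frob x + frob y"
    and frob_frob_frob: "frob (frob (frob x)) = x"

lemma cubic_frobenius_of_card:
  assumes "prime p" "q = p ^ k" "card (UNIV :: 'a::{finite,field} set) = q ^ 3"
  shows "cubic_frobenius q (\<lambda>x::'a. x ^ q)"
proof
  have "CHAR('a) = p"
    by (rule CHAR_eq_prime_of_card[of p "k * 3"]) (use assms in \<open>simp_all add: power_mult\<close>)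
  then show "(x + y) ^ q = x ^ q + y ^ q" for x y :: 'a
    using assms(1,2) by (intro freshmans_dream') auto
  show "((x ^ q) ^ q) ^ q = x" for x :: 'a
    using power_card_UNIV_eq[of x] assms(3)
    by (metis power_mult power3_eq_cube)
qed simp

context cubic_frobenius
begin

lemma q_pos: "0 < q"
proof (rule ccontr)
  assume "\<not> 0 < q"
  then have "frob x = 1" for x
    by (simp add: frob_eq)
  then show False
    using frob_frob_frob[of 0] by simp
qed

lemma frob_0 [simp]: "frob 0 = 0"
  using q_pos by (simp add: frob_eq)

lemma frob_1 [simp]: "frob 1 = 1"
  by (simp add: frob_eq)

lemma frob_mult: "frob (x * y) = frob x * frob y"
  by (simp add: frob_eq power_mult_distrib)

lemma frob_divide: "frob (x / y) = frob x / frob y"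
  by (simp add: frob_eq power_divide)

lemma frob_diff: "frob (x - y) = frob x - frob y"
proof -
  have "frob x = frob (x - y) + frob y"
    using frob_add[of "x - y" y] by simp
  then show ?thesis
    by simp
qed

lemma frob_inj: "frob x = frob y \<Longrightarrow> x = y"
  by (metis frob_frob_frob)

lemma frob_eq_0_iff [simp]: "frob x = 0 \<longleftrightarrow> x = 0"
  using frob_inj[of x 0] by auto

lemma mem_Fq_iff: "x \<in> Fq q \<longleftrightarrow> frob x = x"
  by (simp add: Fq_def frob_eq)

lemma Fq_closed:
  fixes x y :: 'a
  shows "(0::'a) \<in> Fq q" "(1::'a) \<in> Fq q"
  "x \<in> Fq q \<Longrightarrow> y \<in> Fq q \<Longrightarrow> x + y \<in> Fq q"
  "x \<in> Fq q \<Longrightarrow> y \<in> Fq q \<Longrightarrow> x - y \<in> Fq q"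
  "x \<in> Fq q \<Longrightarrow> y \<in> Fq q \<Longrightarrow> x * y \<in> Fq q"
  "x \<in> Fq q \<Longrightarrow> y \<in> Fq q \<Longrightarrow> x / y \<in> Fq q"
  by (simp_all add: mem_Fq_iff frob_add frob_diff frob_mult frob_divide)

lemma power_q_squared: "(x::'a) ^ (q^2) = frob (frob x)"
  by (simp add: frob_eq power2_eq_square power_mult)

end


section \<open>Binary forms, cross ratios and linear relations\<close>

definition pcoord :: "'a \<times> 'a \<Rightarrow> bool \<Rightarrow> 'a" where
  "pcoord u b = (if b then snd u else fst u)"

definition det2 :: "'a::comm_ring \<times> 'a \<Rightarrow> 'a \<times> 'a \<Rightarrow> 'a" where
  "det2 u v = fst u * snd v - snd u * fst v"

definition cross_ratio :: "'a::field \<times> 'a \<Rightarrow> 'a \<times> 'a \<Rightarrow> 'a \<times> 'a \<Rightarrow> 'a \<times> 'a \<Rightarrow> 'a" where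
  "cross_ratio b1 b2 b3 b4 = det2 b1 b3 * det2 b2 b4 / (det2 b1 b4 * det2 b2 b3)"

definition Fq_cross_ratio_among :: "nat \<Rightarrow> ('i \<Rightarrow> 'a::field \<times> 'a) \<Rightarrow> 'i set \<Rightarrow> bool" where
  "Fq_cross_ratio_among q a J \<longleftrightarrow> (\<exists>i1 i2 i3 i4. distinct [i1, i2, i3, i4] \<and> {i1, i2, i3, i4} \<subseteq> J
     \<and> cross_ratio (a i1) (a i2) (a i3) (a i4) \<in> Fq q)"

abbreviation proj_point :: "'a::field \<times> 'a \<Rightarrow> ('a \<times> 'a) set" where
  "proj_point u \<equiv> proj1 (fst u) (snd u)"

lemma det2_self [simp]: "det2 u u = 0"
  by (simp add: det2_def mult.commute)

lemma det2_swap: "det2 v u = - det2 u v"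
  by (simp add: det2_def algebra_simps)

lemma det2_nonzero_imp_nonzero: "det2 u v \<noteq> 0 \<Longrightarrow> u \<noteq> (0, 0)"
  by (auto simp: det2_def)

lemma det2_cramer: "det2 u v * pcoord w j = det2 u w * pcoord v j + det2 w v * pcoord u j"
  by (simp add: det2_def pcoord_def algebra_simps)

lemma det2_cross_ratio_combination:
  assumes "det2 b1 b4 \<noteq> 0" "det2 b2 b3 \<noteq> 0"
  shows "det2 b1 b3 * pcoord b2 j + det2 b3 b2 * cross_ratio b1 b2 b3 b4 * pcoord b1 j
    = det2 b1 b3 * det2 b1 b2 / det2 b1 b4 * pcoord b4 j"
proof -
  have "det2 b3 b2 * cross_ratio b1 b2 b3 b4 = - (det2 b1 b3 * (det2 b2 b4 / det2 b1 b4))"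
    using assms det2_swap[of b2 b3] by (simp add: cross_ratio_def field_simps)
  then have "det2 b1 b3 * pcoord b2 j + det2 b3 b2 * cross_ratio b1 b2 b3 b4 * pcoord b1 j
      = det2 b1 b3 / det2 b1 b4 * (det2 b1 b4 * pcoord b2 j + det2 b4 b2 * pcoord b1 j)"
    using assms(1) det2_swap[of b2 b4] by (simp add: field_simps)
  also have "\<dots> = det2 b1 b3 * det2 b1 b2 / det2 b1 b4 * pcoord b4 j"
    using det2_cramer[of b1 b2 b4 j] by simp
  finally show ?thesis .
qed

lemma cross_ratio_eq_of_proportional:
  assumes "c4 * det2 b1 b4 * (d3 * det2 b2 b3) = d4 * det2 b2 b4 * (c3 * det2 b1 b3)"
    and "c3 * det2 b1 b3 \<noteq> 0" "d4 * det2 b2 b4 \<noteq> 0" "det2 b1 b4 \<noteq> 0" "det2 b2 b3 \<noteq> 0"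
  shows "cross_ratio b1 b2 b3 b4 = c4 * d3 / (c3 * d4)"
  using assms by (simp add: cross_ratio_def field_simps)

definition linear_relation :: "'i set \<Rightarrow> ('i \<Rightarrow> 'a::comm_ring) \<Rightarrow> ('i \<Rightarrow> 'x \<Rightarrow> 'a) \<Rightarrow> bool" where
  "linear_relation I c v \<longleftrightarrow> (\<forall>x. (\<Sum>i\<in>I. c i * v i x) = 0)"

lemma linear_relation_remove:
  assumes "linear_relation I c v" "c i = 0"
  shows "linear_relation (I - {i}) c v"
proof (cases "finite I")
  case True
  then show ?thesis
    using assms by (simp add: linear_relation_def sum_diff1)
qed (simp add: linear_relation_def)

lemma linear_relation_eliminate:
  assumes c: "linear_relation I c v" and d: "linear_relation I d v" and "i \<in> I"
  shows "(\<exists>e. linear_relation (I - {i}) e v \<and> (\<exists>j\<in>I - {i}. e j \<noteq> 0))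
    \<or> (\<forall>j\<in>I. c i * d j = d i * c j)"
proof -
  define e where "e j = c i * d j - d i * c j" for j
  have "(\<Sum>j\<in>I. e j * v j x) = c i * (\<Sum>j\<in>I. d j * v j x) - d i * (\<Sum>j\<in>I. c j * v j x)" for x
    by (simp add: e_def sum_distrib_left sum_subtractf algebra_simps)
  then have "linear_relation I e v"
    using c d by (simp add: linear_relation_def)
  then have "linear_relation (I - {i}) e v"
    by (rule linear_relation_remove) (simp add: e_def mult.commute)
  moreover have "c i * d j = d i * c j" if "j \<in> I" "\<forall>j\<in>I - {i}. e j = 0" for j
    using that by (cases "j = i") (auto simp: e_def mult.commute)
  ultimately show ?thesis
    by blast
qed

lemma sum_det2_eq_0:
  assumes "linear_relation I c (\<lambda>i. pcoord (u i))"
  shows "(\<Sum>i\<in>I. c i * det2 p (u i)) = 0"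
proof -
  have "(\<Sum>i\<in>I. c i * det2 p (u i))
      = fst p * (\<Sum>i\<in>I. c i * pcoord (u i) True) - snd p * (\<Sum>i\<in>I. c i * pcoord (u i) False)"
    by (simp add: det2_def pcoord_def sum_distrib_left sum_subtractf algebra_simps)
  with assms show ?thesis
    by (simp add: linear_relation_def)
qed

lemma linear_relation_det2:
  assumes "linear_relation I c (\<lambda>i (b, x). pcoord (u i) b * v i x)"
  shows "linear_relation I (\<lambda>i. c i * det2 p (u i)) v"
  unfolding linear_relation_def
proof
  fix x
  have "linear_relation I (\<lambda>i. c i * v i x) (\<lambda>i. pcoord (u i))"
    using assms by (simp add: linear_relation_def mult_ac)
  then have "(\<Sum>i\<in>I. c i * v i x * det2 p (u i)) = 0"
    by (rule sum_det2_eq_0)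
  then show "(\<Sum>i\<in>I. c i * det2 p (u i) * v i x) = 0"
    by (simp add: mult_ac)
qed

lemma linear_relation_reindex:
  assumes "linear_relation I c v" "\<And>i y. w i y = v i (g y)"
  shows "linear_relation I c w"
  using assms by (simp add: linear_relation_def)


section \<open>Dependence in a small subspace over a finite subfield\<close>

abbreviation lincomb_span :: "'a::field set \<Rightarrow> nat \<Rightarrow> (nat \<Rightarrow> nat \<Rightarrow> 'a) \<Rightarrow> (nat \<Rightarrow> 'a) set" where
  "lincomb_span K m w \<equiv> {Fq_lincomb m l w | l. \<forall>j<m. l j \<in> K}"

lemma lincomb_span_card_le:
  assumes "finite K"
  shows "finite (lincomb_span K m w)" "card (lincomb_span K m w) \<le> card K ^ m"
proof -
  let ?L = "PiE {..<m} (\<lambda>_. K)"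
  have span_sub: "lincomb_span K m w \<subseteq> (\<lambda>l. Fq_lincomb m l w) ` ?L"
  proof
    fix x assume "x \<in> lincomb_span K m w"
    then obtain l where "x = Fq_lincomb m l w" "\<forall>j<m. l j \<in> K"
      by blast
    moreover have "Fq_lincomb m (restrict l {..<m}) w = Fq_lincomb m l w"
      by (simp add: Fq_lincomb_def)
    ultimately show "x \<in> (\<lambda>l. Fq_lincomb m l w) ` ?L"
      by (intro image_eqI[of _ _ "restrict l {..<m}"]) auto
  qed
  have "finite ?L"
    using assms by (simp add: finite_PiE)
  then show "finite (lincomb_span K m w)"
    using span_sub finite_surj by blast
  have "card (lincomb_span K m w) \<le> card ((\<lambda>l. Fq_lincomb m l w) ` ?L)"
    using span_sub \<open>finite ?L\<close> by (intro card_mono) auto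
  also have "\<dots> \<le> card ?L"
    using \<open>finite ?L\<close> by (rule card_image_le)
  finally show "card (lincomb_span K m w) \<le> card K ^ m"
    by (simp add: card_PiE)
qed

lemma lincomb_span_sum_closed:
  assumes K: "0 \<in> K" "\<And>x y. x \<in> K \<Longrightarrow> y \<in> K \<Longrightarrow> x + y \<in> K"
      "\<And>x y. x \<in> K \<Longrightarrow> y \<in> K \<Longrightarrow> x * y \<in> K"
    and c: "\<And>i. i \<in> I \<Longrightarrow> c i \<in> K"
    and v: "\<And>i. i \<in> I \<Longrightarrow> v i \<in> lincomb_span K m w"
  shows "(\<lambda>x. \<Sum>i\<in>I. c i * v i x) \<in> lincomb_span K m w"
proof -
  have "\<forall>i\<in>I. \<exists>l. v i = Fq_lincomb m l w \<and> (\<forall>j<m. l j \<in> K)"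
    using v by blast
  then obtain l where l: "\<forall>i\<in>I. v i = Fq_lincomb m (l i) w \<and> (\<forall>j<m. l i j \<in> K)"
    by (rule bchoice[elim_format]) blast
  have "(\<Sum>i\<in>I. c i * v i x) = (\<Sum>j<m. (\<Sum>i\<in>I. c i * l i j) * w j x)" for x
  proof -
    have "(\<Sum>i\<in>I. c i * v i x) = (\<Sum>i\<in>I. \<Sum>j<m. c i * l i j * w j x)"
      using l by (intro sum.cong) (simp_all add: Fq_lincomb_def sum_distrib_left mult.assoc)
    also have "\<dots> = (\<Sum>j<m. (\<Sum>i\<in>I. c i * l i j) * w j x)"
      by (subst sum.swap) (simp add: sum_distrib_right)
    finally show ?thesis .
  qed
  then have "(\<lambda>x. \<Sum>i\<in>I. c i * v i x) = Fq_lincomb m (\<lambda>j. \<Sum>i\<in>I. c i * l i j) w"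
    by (simp add: Fq_lincomb_def)
  moreover have "(\<Sum>i\<in>I. c i * l i j) \<in> K" if "j < m" for j
  proof -
    have "(\<Sum>i\<in>J. c i * l i j) \<in> K" if "J \<subseteq> I" for J
      using that by (induction J rule: infinite_finite_induct) (use K c l \<open>j < m\<close> in auto)
    then show ?thesis
      by blast
  qed
  ultimately show ?thesis
    by blast
qed

lemma subfield_span_dependent:
  fixes K :: "'a::field set" and v :: "'i \<Rightarrow> nat \<Rightarrow> 'a"
  assumes K: "finite K" "0 \<in> K" "1 \<in> K" "\<And>x y. x \<in> K \<Longrightarrow> y \<in> K \<Longrightarrow> x + y \<in> K"
      "\<And>x y. x \<in> K \<Longrightarrow> y \<in> K \<Longrightarrow> x * y \<in> K" "\<And>x y. x \<in> K \<Longrightarrow> y \<in> K \<Longrightarrow> x - y \<in> K"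
    and I: "finite I" "m < card I"
    and v: "\<And>i. i \<in> I \<Longrightarrow> v i \<in> lincomb_span K m w"
  shows "\<exists>c. (\<forall>i\<in>I. c i \<in> K) \<and> (\<exists>i\<in>I. c i \<noteq> 0) \<and> linear_relation I c v"
proof -
  let ?C = "PiE I (\<lambda>_. K)"
  define combine where "combine c = (\<lambda>x. \<Sum>i\<in>I. c i * v i x)" for c
  have "combine c \<in> lincomb_span K m w" if "c \<in> ?C" for c
    unfolding combine_def by (rule lincomb_span_sum_closed[OF K(2,4,5)]) (use that v in auto)
  then have sub: "combine ` ?C \<subseteq> lincomb_span K m w"
    by blast
  have "card {0, 1::'a} \<le> card K"
    using K by (intro card_mono) auto
  then have "card K ^ m < card K ^ card I"
    using I by (intro power_strict_increasing) auto
  then have lt: "card (lincomb_span K m w) < card ?C"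
    using lincomb_span_card_le(2)[OF K(1), of m w] I by (simp add: card_PiE)
  have "\<not> inj_on combine ?C"
  proof
    assume "inj_on combine ?C"
    then have "card ?C \<le> card (lincomb_span K m w)"
      using card_mono[OF lincomb_span_card_le(1)[OF K(1)] sub] by (simp add: card_image)
    with lt show False
      by simp
  qed
  then obtain c1 c2 where c12: "c1 \<in> ?C" "c2 \<in> ?C" "c1 \<noteq> c2" "combine c1 = combine c2"
    unfolding inj_on_def by blast
  then obtain i where "i \<in> I" "c1 i \<noteq> c2 i"
    by (metis PiE_ext)
  moreover have "linear_relation I (\<lambda>i. c1 i - c2 i) v"
    using fun_cong[OF c12(4)]
    by (simp add: linear_relation_def combine_def left_diff_distrib sum_subtractf)
  ultimately show ?thesis
    using c12 K(6) by (intro exI[of _ "\<lambda>i. c1 i - c2 i"]) auto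
qed


section \<open>The projective line and its \<open>q\<close>-order sublines\<close>

lemma proj1_eq_range: "proj1 x y = range (\<lambda>l. (l * x, l * y))"
  by (auto simp: proj1_def)

lemma pgl_act_proj1:
  "pgl_act al be ga de (proj1 x y) = proj1 (al * x + be * y) (ga * x + de * y)"
  by (simp add: pgl_act_def proj1_eq_range image_image algebra_simps)

lemma proj1_smult:
  assumes "(k::'a::field) \<noteq> 0"
  shows "proj1 (k * x) (k * y) = proj1 x y"
proof -
  have "surj (\<lambda>l. l * k)"
    using assms by (intro surjI[of _ "\<lambda>l. l / k"]) simp
  then have "proj1 x y = (\<lambda>l. (l * x, l * y)) ` range (\<lambda>l. l * k)"
    by (simp add: proj1_eq_range)
  then show ?thesis
    by (simp add: proj1_eq_range image_image mult.assoc)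
qed

lemma proj1_self: "(x, y) \<in> proj1 x y"
  unfolding proj1_def by (auto intro: exI[of _ 1])

lemma proj1_1_inj:
  assumes "proj1 1 t = proj1 (1::'a::field) t'"
  shows "t = t'"
proof -
  have "(1, t) \<in> proj1 1 t'"
    using proj1_self[of 1 t] assms by simp
  then show ?thesis
    by (auto simp: proj1_def)
qed

lemma proj1_0_1_neq: "proj1 0 1 \<noteq> proj1 (1::'a::field) t"
proof
  assume "proj1 0 1 = proj1 (1::'a) t"
  then have "(0, 1) \<in> proj1 (1::'a) t"
    using proj1_self[of "0::'a" 1] by simp
  then show False
    by (auto simp: proj1_def)
qed

lemma theta_proj1_1: "theta q (proj1 1 t) = P q 1 t (t ^ (q^2 + q)) (t ^ (q^2 + q + 1))"
proof -
  have "(THE t'. proj1 1 t = proj1 1 t') = t"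
    by (rule the_equality) (auto dest: proj1_1_inj)
  then show ?thesis
    by (auto simp: theta_def)
qed

lemma theta_proj1_0_1: "theta q (proj1 0 (1::'a::field)) = P q 0 0 0 1"
  using proj1_0_1_neq[where 'a = 'a] by (auto simp: theta_def)

lemma q_subline_through_cross_ratio:
  fixes b1 b2 b3 b4 :: "'a::field \<times> 'a"
  assumes q: "0 < q"
    and nz: "det2 b1 b2 \<noteq> 0" "det2 b1 b3 \<noteq> 0" "det2 b1 b4 \<noteq> 0" "det2 b2 b3 \<noteq> 0"
    and cr: "cross_ratio b1 b2 b3 b4 \<in> Fq q"
  shows "\<exists>L. q_subline q L \<and> proj_point ` {b1, b2, b3, b4} \<subseteq> L"
proof -
  define c where "c = cross_ratio b1 b2 b3 b4"
  define D13 D32 where "D13 = det2 b1 b3" and "D32 = det2 b3 b2"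
  \<comment> \<open>the matrix with columns \<open>D13 * b2\<close> and \<open>D32 * b1\<close> maps \<open>\<infinity>, 0, 1, c\<close> to \<open>b1, b2, b3, b4\<close>\<close>
  let ?g = "pgl_act (D13 * fst b2) (D32 * fst b1) (D13 * snd b2) (D32 * snd b1)"
  have nz': "D13 \<noteq> 0" "D32 \<noteq> 0"
    using nz det2_swap[of b2 b3] by (auto simp: D13_def D32_def)
  have "D13 * fst b2 * (D32 * snd b1) - D32 * fst b1 * (D13 * snd b2) = - (D13 * D32 * det2 b1 b2)"
    by (simp add: det2_def[of b1 b2] algebra_simps)
  with nz' nz(1) have "D13 * fst b2 * (D32 * snd b1) - D32 * fst b1 * (D13 * snd b2) \<noteq> 0"
    by simp
  then have sub: "q_subline q (?g ` PG1q q)"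
    unfolding q_subline_def by blast
  have 1: "?g (proj1 0 1) = proj_point b1" and 2: "?g (proj1 1 0) = proj_point b2"
    using nz' by (simp_all add: pgl_act_proj1 proj1_smult)
  have "?g (proj1 1 1) = proj1 (det2 b1 b2 * fst b3) (det2 b1 b2 * snd b3)"
    using det2_cramer[of b1 b2 b3 False] det2_cramer[of b1 b2 b3 True]
    by (simp add: pgl_act_proj1 pcoord_def D13_def D32_def)
  then have 3: "?g (proj1 1 1) = proj_point b3"
    using nz(1) by (simp add: proj1_smult)
  let ?k = "D13 * det2 b1 b2 / det2 b1 b4"
  have "?g (proj1 1 c) = proj1 (?k * fst b4) (?k * snd b4)"
    using det2_cross_ratio_combination[OF nz(3,4), of False] det2_cross_ratio_combination[OF nz(3,4), of True]
    by (simp add: pgl_act_proj1 pcoord_def D13_def D32_def c_def mult_ac)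
  then have 4: "?g (proj1 1 c) = proj_point b4"
    using nz nz' proj1_smult[of ?k "fst b4" "snd b4"] by simp
  have "proj1 0 1 \<in> PG1q q" "proj1 1 0 \<in> PG1q q" "proj1 1 1 \<in> PG1q q" "proj1 1 c \<in> PG1q q"
    using q cr by (auto simp: PG1q_def Fq_def c_def)
  then show ?thesis
    using sub 1 2 3 4 by blast
qed


section \<open>The tensor embedding of \<open>PG(1, q\<^sup>3)\<close>\<close>

context cubic_frobenius
begin

definition frob_pair :: "'a \<times> 'a \<Rightarrow> 'a \<times> 'a" where
  "frob_pair u = (frob (fst u), frob (snd u))"

lemma det2_frob_pair: "det2 (frob_pair u) (frob_pair v) = frob (det2 u v)"
  by (simp add: det2_def frob_pair_def frob_diff frob_mult)

definition frob_tensor :: "'a \<times> 'a \<Rightarrow> bool \<times> bool \<Rightarrow> 'a" where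
  "frob_tensor u = (\<lambda>(j, k). pcoord (frob_pair u) j * pcoord (frob_pair (frob_pair u)) k)"

text \<open>\<open>tensor_vec u\<close> is \<open>u \<otimes> u\<^sup>q \<otimes> u\<^sup>q\<^sup>2\<close>, its coordinates ordered as in \<^const>\<open>u1vec\<close>.\<close>

definition tensor_vec :: "'a \<times> 'a \<Rightarrow> nat \<Rightarrow> 'a" where
  "tensor_vec u = (\<lambda>n. if n < 8 then
     [fst u * frob_tensor u (False, False), fst u * frob_tensor u (False, True),
      fst u * frob_tensor u (True, False), fst u * frob_tensor u (True, True),
      snd u * frob_tensor u (False, False), snd u * frob_tensor u (False, True),
      snd u * frob_tensor u (True, False), snd u * frob_tensor u (True, True)] ! n else 0)"

lemma tensor_vec_index:
  "tensor_vec u ((if b then 4 else 0) + (if j then 2 else 0) + (if k then 1 else 0))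
    = pcoord u b * frob_tensor u (j, k)"
  by (cases b; cases j; cases k) (simp_all add: tensor_vec_def pcoord_def)

lemma frob_tensor_nonzero:
  assumes "u \<noteq> (0, 0)"
  shows "\<exists>jk. frob_tensor u jk \<noteq> 0"
proof (cases "fst u = 0")
  case True
  with assms have "snd u \<noteq> 0"
    by (metis prod.collapse)
  then have "frob_tensor u (True, True) \<noteq> 0"
    by (simp add: frob_tensor_def frob_pair_def pcoord_def)
  then show ?thesis ..
next
  case False
  then have "frob_tensor u (False, False) \<noteq> 0"
    by (simp add: frob_tensor_def frob_pair_def pcoord_def)
  then show ?thesis ..
qed

lemma tensor_vec_nonzero:
  assumes "u \<noteq> (0, 0)"
  shows "\<exists>n. tensor_vec u n \<noteq> 0"
proof (cases "fst u = 0")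
  case True
  with assms have "snd u \<noteq> 0"
    by (metis prod.collapse)
  then have "tensor_vec u 7 \<noteq> 0"
    by (simp add: tensor_vec_def frob_tensor_def frob_pair_def pcoord_def)
  then show ?thesis ..
next
  case False
  then have "tensor_vec u 0 \<noteq> 0"
    by (simp add: tensor_vec_def frob_tensor_def frob_pair_def pcoord_def)
  then show ?thesis ..
qed

lemma linear_relation_tensor_vec_det2:
  assumes "linear_relation I c (\<lambda>i. tensor_vec (a i))"
  shows "linear_relation I (\<lambda>i. c i * det2 p (a i)) (\<lambda>i. frob_tensor (a i))"
proof (rule linear_relation_det2)
  show "linear_relation I c (\<lambda>i (b, jk). pcoord (a i) b * frob_tensor (a i) jk)"
    by (rule linear_relation_reindex[OF assms, where g = "\<lambda>(b, j, k).
        (if b then 4 else 0) + (if j then 2 else 0) + (if k then 1 else 0)"])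
      (auto simp: tensor_vec_index split: prod.splits)
qed

lemma linear_relation_contract_at:
  assumes rel: "linear_relation I c (\<lambda>i. tensor_vec (a i))" and nz: "\<exists>i\<in>I. c i \<noteq> 0"
    and fin: "finite I" and i0: "i0 \<in> I" "a i0 \<noteq> (0, 0)"
    and det: "\<And>i. i \<in> I - {i0} \<Longrightarrow> det2 (a i0) (a i) \<noteq> 0"
  shows "linear_relation (I - {i0}) (\<lambda>i. c i * det2 (a i0) (a i)) (\<lambda>i. frob_tensor (a i))"
    and "\<exists>i\<in>I - {i0}. c i * det2 (a i0) (a i) \<noteq> 0"
proof -
  show "linear_relation (I - {i0}) (\<lambda>i. c i * det2 (a i0) (a i)) (\<lambda>i. frob_tensor (a i))"
    using linear_relation_tensor_vec_det2[OF rel] by (rule linear_relation_remove) simp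
  show "\<exists>i\<in>I - {i0}. c i * det2 (a i0) (a i) \<noteq> 0"
  proof (rule ccontr)
    assume "\<not> ?thesis"
    then have zero: "c i = 0" if "i \<in> I - {i0}" for i
      using det that by auto
    have "c i0 * tensor_vec (a i0) n = 0" for n
    proof -
      have "(\<Sum>i\<in>I. c i * tensor_vec (a i) n) = 0"
        using rel by (simp add: linear_relation_def)
      then show ?thesis
        using fin i0 zero by (simp add: sum.remove)
    qed
    then have "c i0 = 0"
      using tensor_vec_nonzero[OF i0(2)] by auto
    then show False
      using nz zero by blast
  qed
qed

lemma frob_tensor_relation_contract:
  assumes "linear_relation I e (\<lambda>i. frob_tensor (a i))"
  shows "(\<Sum>i\<in>I. e i * frob (det2 u (a i)) * frob (frob (det2 v (a i)))) = 0"
proof -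
  have "linear_relation I (\<lambda>i. e i * det2 (frob_pair u) (frob_pair (a i)))
      (\<lambda>i. pcoord (frob_pair (frob_pair (a i))))"
    using assms unfolding frob_tensor_def by (rule linear_relation_det2)
  then have "(\<Sum>i\<in>I. e i * det2 (frob_pair u) (frob_pair (a i))
      * det2 (frob_pair (frob_pair v)) (frob_pair (frob_pair (a i)))) = 0"
    by (rule sum_det2_eq_0)
  then show ?thesis
    by (simp add: det2_frob_pair)
qed

lemma frob_quotient_mem_Fq:
  assumes "frob x * frob (frob y) = frob (frob x) * frob y" "y \<noteq> 0"
  shows "x / y \<in> Fq q"
proof -
  have "frob (x / y) = frob (frob (x / y))"
    using assms by (simp add: frob_divide frac_eq_eq)
  then have "x / y = frob (x / y)"
    by (rule frob_inj)
  then show ?thesis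
    by (simp add: mem_Fq_iff)
qed

lemma frob_tensor_relation_coeff_nonzero:
  assumes rel: "linear_relation {i1, i2, i3, i4} e (\<lambda>i. frob_tensor (a i))"
    and nz: "\<exists>i\<in>{i1, i2, i3, i4}. e i \<noteq> 0"
    and dist: "distinct [i1, i2, i3, i4]"
    and det: "\<And>i j. i \<in> {i1, i2, i3, i4} \<Longrightarrow> j \<in> {i1, i2, i3, i4} \<Longrightarrow> i \<noteq> j
      \<Longrightarrow> det2 (a i) (a j) \<noteq> 0"
  shows "e i2 \<noteq> 0"
proof
  assume "e i2 = 0"
  have "det2 (a i1) (a i3) \<noteq> 0" "det2 (a i4) (a i3) \<noteq> 0" "det2 (a i1) (a i4) \<noteq> 0"
    "det2 (a i3) (a i4) \<noteq> 0"
    using det dist by auto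
  with \<open>e i2 = 0\<close> frob_tensor_relation_contract[OF rel, of "a i1" "a i4"]
    frob_tensor_relation_contract[OF rel, of "a i1" "a i3"] dist
  have "e i3 = 0" "e i4 = 0"
    by simp_all
  have "a i1 \<noteq> (0, 0)"
    using det[of i1 i2] dist by (auto dest: det2_nonzero_imp_nonzero)
  then obtain jk where "frob_tensor (a i1) jk \<noteq> 0"
    using frob_tensor_nonzero by blast
  moreover have "(\<Sum>i\<in>{i1, i2, i3, i4}. e i * frob_tensor (a i) jk) = 0"
    using rel unfolding linear_relation_def by blast
  with dist \<open>e i2 = 0\<close> \<open>e i3 = 0\<close> \<open>e i4 = 0\<close> have "e i1 * frob_tensor (a i1) jk = 0"
    by simp
  ultimately have "e i1 = 0"
    by simp
  with nz \<open>e i2 = 0\<close> \<open>e i3 = 0\<close> \<open>e i4 = 0\<close> show False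
    by simp
qed

lemma frob_tensor_relation_cross_ratio:
  assumes rel: "linear_relation {i1, i2, i3, i4} e (\<lambda>i. frob_tensor (a i))"
    and nz: "\<exists>i\<in>{i1, i2, i3, i4}. e i \<noteq> 0"
    and dist: "distinct [i1, i2, i3, i4]"
    and det: "\<And>i j. i \<in> {i1, i2, i3, i4} \<Longrightarrow> j \<in> {i1, i2, i3, i4} \<Longrightarrow> i \<noteq> j
      \<Longrightarrow> det2 (a i) (a j) \<noteq> 0"
  shows "cross_ratio (a i1) (a i4) (a i2) (a i3) \<in> Fq q"
proof -
  define D where "D i j = det2 (a i) (a j)" for i j
  have A: "e i2 * frob (D i1 i2) * frob (frob (D i4 i2))
      + e i3 * frob (D i1 i3) * frob (frob (D i4 i3)) = 0" (is "?A = 0")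
    using frob_tensor_relation_contract[OF rel, of "a i1" "a i4"] dist by (simp add: D_def)
  have B: "e i2 * frob (D i4 i2) * frob (frob (D i1 i2))
      + e i3 * frob (D i4 i3) * frob (frob (D i1 i3)) = 0" (is "?B = 0")
    using frob_tensor_relation_contract[OF rel, of "a i4" "a i1"] dist by (simp add: D_def)
  define X Y where "X = D i1 i2 * D i4 i3" and "Y = D i1 i3 * D i4 i2"
  have "e i2 * (frob X * frob (frob Y) - frob (frob X) * frob Y)
      = ?A * (frob (D i4 i3) * frob (frob (D i1 i3))) - ?B * (frob (D i1 i3) * frob (frob (D i4 i3)))"
    by (simp add: X_def Y_def frob_mult algebra_simps)
  with A B frob_tensor_relation_coeff_nonzero[OF rel nz dist det]
  have "frob X * frob (frob Y) = frob (frob X) * frob Y"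
    by simp
  moreover have "Y \<noteq> 0"
    using det dist by (auto simp: Y_def D_def)
  ultimately have "X / Y \<in> Fq q"
    by (rule frob_quotient_mem_Fq)
  then show ?thesis
    by (simp add: cross_ratio_def X_def Y_def D_def)
qed

lemma Fq_cross_ratio_among_of_relation:
  assumes rel: "linear_relation J e (\<lambda>i. frob_tensor (a i))" and nz: "\<exists>i\<in>J. e i \<noteq> 0"
    and J: "J \<subseteq> K" "card J = 4"
    and det: "\<And>i j. i \<in> K \<Longrightarrow> j \<in> K \<Longrightarrow> i \<noteq> j \<Longrightarrow> det2 (a i) (a j) \<noteq> 0"
  shows "Fq_cross_ratio_among q a K"
proof -
  have "card J = Suc 3"
    using J by simp
  then obtain i1 B where B: "J = insert i1 B" "i1 \<notin> B" "card B = 3"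
    unfolding card_Suc_eq by blast
  then obtain i2 i3 i4 where "B = {i2, i3, i4}" "i2 \<noteq> i3" "i3 \<noteq> i4" "i2 \<noteq> i4"
    unfolding card_3_iff by blast
  with B have J_eq: "J = {i1, i2, i3, i4}" and dist: "distinct [i1, i2, i3, i4]"
    by auto
  have "cross_ratio (a i1) (a i4) (a i2) (a i3) \<in> Fq q"
    using rel nz det J(1) unfolding J_eq by (intro frob_tensor_relation_cross_ratio[OF _ _ dist]) auto
  with dist J(1) show ?thesis
    unfolding J_eq Fq_cross_ratio_among_def
    by (intro exI[of _ i1] exI[of _ i4] exI[of _ i2] exI[of _ i3]) auto
qed

lemma seven_points_contracted_relations:
  fixes a :: "nat \<Rightarrow> 'a \<times> 'a"
  assumes fin: "finite (Fq q :: 'a set)"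
    and det: "\<And>i j. i < 7 \<Longrightarrow> j < 7 \<Longrightarrow> i \<noteq> j \<Longrightarrow> det2 (a i) (a j) \<noteq> 0"
    and span: "\<And>i. i < 7 \<Longrightarrow> tensor_vec (a i) \<in> lincomb_span (Fq q) 5 w"
  obtains c c' where "\<forall>i\<in>{1..5}. c i \<in> Fq q \<and> c' i \<in> Fq q"
    "linear_relation {1..5} (\<lambda>i. c i * det2 (a 0) (a i)) (\<lambda>i. frob_tensor (a i))"
    "\<exists>i\<in>{1..5}. c i * det2 (a 0) (a i) \<noteq> 0"
    "linear_relation {1..5} (\<lambda>i. c' i * det2 (a 6) (a i)) (\<lambda>i. frob_tensor (a i))"
    "\<exists>i\<in>{1..5}. c' i * det2 (a 6) (a i) \<noteq> 0"
proof -
  have dependent: "\<exists>c. (\<forall>i\<in>I. c i \<in> Fq q) \<and> (\<exists>i\<in>I. c i \<noteq> 0)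
      \<and> linear_relation I c (\<lambda>i. tensor_vec (a i))" if "I \<subseteq> {..<7}" "card I = 6" for I
    using that fin span
    by (intro subfield_span_dependent[where m = 5]) (auto simp: Fq_closed finite_subset)
  have I: "{0..5} \<subseteq> {..<7::nat}" "card {0..5::nat} = 6" "{1..6} \<subseteq> {..<7::nat}" "card {1..6::nat} = 6"
    by auto
  then obtain c c' where c: "\<forall>i\<in>{0..5}. c i \<in> Fq q" "\<exists>i\<in>{0..5}. c i \<noteq> 0"
      "linear_relation {0..5} c (\<lambda>i. tensor_vec (a i))"
    and c': "\<forall>i\<in>{1..6}. c' i \<in> Fq q" "\<exists>i\<in>{1..6}. c' i \<noteq> 0"
      "linear_relation {1..6} c' (\<lambda>i. tensor_vec (a i))"
    using dependent[OF I(1,2)] dependent[OF I(3,4)] by blast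
  have "{0..5} - {0} = {1..5::nat}" "{1..6} - {6} = {1..5::nat}"
    by auto
  moreover have "\<forall>i\<in>{1..5}. c i \<in> Fq q \<and> c' i \<in> Fq q"
    using c(1) c'(1) by simp
  ultimately show thesis
    using linear_relation_contract_at[OF c(3) c(2), of 0] linear_relation_contract_at[OF c'(3) c'(2), of 6]
      det det2_nonzero_imp_nonzero[OF det[of 0 1]] det2_nonzero_imp_nonzero[OF det[of 6 1]]
    by (intro that[of c c']) simp_all
qed

lemma seven_points_Fq_cross_ratio:
  fixes a :: "nat \<Rightarrow> 'a \<times> 'a"
  assumes fin: "finite (Fq q :: 'a set)"
    and det: "\<And>i j. i < 7 \<Longrightarrow> j < 7 \<Longrightarrow> i \<noteq> j \<Longrightarrow> det2 (a i) (a j) \<noteq> 0"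
    and span: "\<And>i. i < 7 \<Longrightarrow> tensor_vec (a i) \<in> lincomb_span (Fq q) 5 w"
  shows "Fq_cross_ratio_among q a {..<7}"
proof -
  obtain c c' where c: "\<forall>i\<in>{1..5}. c i \<in> Fq q \<and> c' i \<in> Fq q"
    and al: "linear_relation {1..5} (\<lambda>i. c i * det2 (a 0) (a i)) (\<lambda>i. frob_tensor (a i))"
      "\<exists>i\<in>{1..5}. c i * det2 (a 0) (a i) \<noteq> 0"
    and be: "linear_relation {1..5} (\<lambda>i. c' i * det2 (a 6) (a i)) (\<lambda>i. frob_tensor (a i))"
      "\<exists>i\<in>{1..5}. c' i * det2 (a 6) (a i) \<noteq> 0"
    by (rule seven_points_contracted_relations[where a = a and w = w, OF fin det span])
  have det': "det2 (a i) (a j) \<noteq> 0" if "i \<in> {..<7}" "j \<in> {..<7}" "i \<noteq> j" for i j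
    using det that by simp
  have four_of_five: ?thesis if "linear_relation {1..5} e (\<lambda>i. frob_tensor (a i))"
      "\<exists>i\<in>{1..5}. e i \<noteq> 0" "e k = 0" "k \<in> {1..5}" for e k
  proof (rule Fq_cross_ratio_among_of_relation[OF _ _ _ _ det'])
    show "linear_relation ({1..5} - {k}) e (\<lambda>i. frob_tensor (a i))"
      using that(1,3) by (rule linear_relation_remove)
    show "\<exists>i\<in>{1..5} - {k}. e i \<noteq> 0"
      using that(2,3) by (metis DiffI singletonD)
  qed (use that(4) in auto)
  have "1 \<in> {1..5::nat}"
    by simp
  from linear_relation_eliminate[OF al(1) be(1) this]
  show ?thesis
  proof (elim disjE exE conjE)
    fix e
    assume "linear_relation ({1..5} - {1}) e (\<lambda>i. frob_tensor (a i))" "\<exists>j\<in>{1..5} - {1}. e j \<noteq> 0"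
    then show ?thesis
      by (rule Fq_cross_ratio_among_of_relation[OF _ _ _ _ det']) auto
  next
    assume proportional: "\<forall>j\<in>{1..5}. c 1 * det2 (a 0) (a 1) * (c' j * det2 (a 6) (a j))
      = c' 1 * det2 (a 6) (a 1) * (c j * det2 (a 0) (a j))"
    show ?thesis
    proof (cases "c 2 * det2 (a 0) (a 2) = 0 \<or> c' 1 * det2 (a 6) (a 1) = 0")
      case True
      then show ?thesis
        using four_of_five[OF al, of 2] four_of_five[OF be, of 1] by auto
    next
      case False
      have "cross_ratio (a 0) (a 6) (a 2) (a 1) = c 1 * c' 2 / (c 2 * c' 1)"
        using proportional False det by (intro cross_ratio_eq_of_proportional) auto
      also have "\<dots> \<in> Fq q"
        using c by (simp add: Fq_closed)
      finally show ?thesis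
        unfolding Fq_cross_ratio_among_def
        by (intro exI[of _ 0] exI[of _ 6] exI[of _ 2] exI[of _ 1]) auto
    qed
  qed
qed

lemma u1vec_1_eq_tensor_vec: "u1vec q 1 t (t ^ (q^2 + q)) (t ^ (q^2 + q + 1)) = tensor_vec (1, t)"
proof -
  have c: "t ^ (q^2 + q) = frob (frob t) * frob t"
    by (simp add: power_add power_q_squared frob_eq)
  have pq: "x ^ q = frob x" for x :: 'a
    by (simp add: frob_eq)
  show ?thesis
    unfolding u1vec_def tensor_vec_def c
    by (intro ext) (simp add: c pq power_q_squared frob_mult frob_frob_frob frob_tensor_def frob_pair_def
        pcoord_def mult_ac)
qed

lemma u1vec_0_eq_tensor_vec: "u1vec q 0 0 0 1 = tensor_vec (0, 1)"
  unfolding u1vec_def tensor_vec_def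
  using q_pos by (intro ext) (simp add: frob_tensor_def frob_pair_def pcoord_def power_0_left)

lemma O1_representative:
  fixes X :: "(nat \<Rightarrow> 'a) set"
  assumes "X \<in> O1 q"
  obtains u where "fst u = 1 \<or> u = (0, 1)" "X = pt q (tensor_vec u)" "theta q (proj_point u) = X"
proof -
  consider t where "X = P q 1 t (t ^ (q^2 + q)) (t ^ (q^2 + q + 1))" | "X = P q 0 0 0 1"
    using assms unfolding O1_def by blast
  then show thesis
  proof cases
    case 1
    have "X = pt q (tensor_vec (1, t))"
      using 1 by (simp only: P_def u1vec_1_eq_tensor_vec)
    moreover have "theta q (proj_point (1, t)) = X"
      using 1 by (simp add: theta_proj1_1)
    ultimately show thesis
      using that[of "(1, t)"] by simp
  next
    case 2
    have "X = pt q (tensor_vec (0, 1))"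
      using 2 by (simp only: P_def u1vec_0_eq_tensor_vec)
    moreover have "theta q (proj_point (0, 1)) = X"
      using 2 by (simp add: theta_proj1_0_1)
    ultimately show thesis
      using that[of "(0, 1)"] by simp
  qed
qed

lemma O1_enumeration:
  fixes S :: "(nat \<Rightarrow> 'a) set set"
  assumes "S \<subseteq> O1 q" "finite S"
  obtains h a where "bij_betw h {..<card S} S"
    "\<And>i. i < card S \<Longrightarrow> h i = pt q (tensor_vec (a i)) \<and> theta q (proj_point (a i)) = h i"
    "\<And>i j. i < card S \<Longrightarrow> j < card S \<Longrightarrow> i \<noteq> j \<Longrightarrow> det2 (a i) (a j) \<noteq> 0"
proof -
  obtain h where h: "bij_betw h {..<card S} S"
    using ex_bij_betw_nat_finite[OF assms(2)] by (auto simp: atLeast0LessThan)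
  have "\<forall>i\<in>{..<card S}. \<exists>u. (fst u = 1 \<or> u = (0, 1))
      \<and> h i = pt q (tensor_vec u) \<and> theta q (proj_point u) = h i"
  proof
    fix i assume "i \<in> {..<card S}"
    then have "h i \<in> O1 q"
      using h assms(1) by (auto dest: bij_betwE)
    then obtain u where "fst u = 1 \<or> u = (0, 1)" "h i = pt q (tensor_vec u)" "theta q (proj_point u) = h i"
      by (rule O1_representative)
    then show "\<exists>u. (fst u = 1 \<or> u = (0, 1)) \<and> h i = pt q (tensor_vec u) \<and> theta q (proj_point u) = h i"
      by blast
  qed
  then obtain a where a: "\<forall>i\<in>{..<card S}. (fst (a i) = 1 \<or> a i = (0, 1))
      \<and> h i = pt q (tensor_vec (a i)) \<and> theta q (proj_point (a i)) = h i"
    by (rule bchoice[elim_format]) blast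
  have "det2 (a i) (a j) \<noteq> 0" if "i < card S" "j < card S" "i \<noteq> j" for i j
  proof -
    have "h i \<noteq> h j"
      using h that by (auto simp: bij_betw_def inj_on_def)
    then have "a i \<noteq> a j"
      using a that by auto
    moreover have "fst (a i) = 1 \<or> a i = (0, 1)" "fst (a j) = 1 \<or> a j = (0, 1)"
      using a that by auto
    ultimately show ?thesis
      by (cases "a i"; cases "a j") (auto simp: det2_def)
  qed
  with h a show thesis
    using that by blast
qed

end

lemma pt_self: "v \<in> pt q v"
  unfolding pt_def Fq_def by (auto intro!: exI[of _ 1])

lemma twisted_cubic_through_four_points:
  assumes q: "0 < q" and h: "bij_betw h I S"
    and theta: "\<And>i. i \<in> I \<Longrightarrow> theta q (proj_point (a i)) = h i"
    and det: "\<And>i j. i \<in> I \<Longrightarrow> j \<in> I \<Longrightarrow> i \<noteq> j \<Longrightarrow> det2 (a i) (a j) \<noteq> 0"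
    and "Fq_cross_ratio_among q a I"
  shows "\<exists>L T. q_subline q L \<and> T \<subseteq> S \<and> card T = 4 \<and> T \<subseteq> theta q ` L"
proof -
  obtain i1 i2 i3 i4 where i: "distinct [i1, i2, i3, i4]" "{i1, i2, i3, i4} \<subseteq> I"
    and cr: "cross_ratio (a i1) (a i2) (a i3) (a i4) \<in> Fq q"
    using assms(5) unfolding Fq_cross_ratio_among_def by blast
  have "det2 (a i1) (a i2) \<noteq> 0" "det2 (a i1) (a i3) \<noteq> 0" "det2 (a i1) (a i4) \<noteq> 0"
    "det2 (a i2) (a i3) \<noteq> 0"
    using det i by auto
  then obtain L where L: "q_subline q L" "proj_point ` {a i1, a i2, a i3, a i4} \<subseteq> L"
    using q_subline_through_cross_ratio[OF q _ _ _ _ cr] by blast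
  let ?T = "h ` {i1, i2, i3, i4}"
  have "?T \<subseteq> S"
    using h i(2) by (auto dest: bij_betwE)
  moreover have "inj_on h {i1, i2, i3, i4}"
    using inj_on_subset[of h I "{i1, i2, i3, i4}"] h i(2) by (simp add: bij_betw_def)
  with i(1) have "card ?T = 4"
    by (simp add: card_image)
  moreover have "?T \<subseteq> theta q ` L"
  proof
    fix X assume "X \<in> ?T"
    then obtain i where "i \<in> {i1, i2, i3, i4}" "X = h i"
      by blast
    with theta i(2) L(2) have "X = theta q (proj_point (a i))" "proj_point (a i) \<in> L"
      by auto
    then show "X \<in> theta q ` L"
      by blast
  qed
  ultimately show ?thesis
    using L(1) by blast
qed

theorem mainTheorem5:
  fixes q :: nat and S :: "(nat \<Rightarrow> 'a::{finite, field}) set set"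
  assumes "\<exists>p k. prime p \<and> k > 0 \<and> q = p ^ k"
    and "card (UNIV :: 'a set) = q ^ 3"
    and "S \<subseteq> O1 q" and "card S = 7"
    and "\<exists>W. U1_subspace_dim q 5 W \<and> (\<forall>X\<in>S. X \<subseteq> W)"
  shows "\<exists>L T. q_subline q L \<and> T \<subseteq> S \<and> card T = 4 \<and> T \<subseteq> theta q ` L"
proof -
  obtain p k where "prime p" "q = p ^ k"
    using assms(1) by blast
  then interpret cubic_frobenius q "\<lambda>x::'a. x ^ q"
    using assms(2) by (rule cubic_frobenius_of_card)
  obtain W w where W: "W = lincomb_span (Fq q) 5 w" "\<forall>X\<in>S. X \<subseteq> W"
    using assms(5) unfolding U1_subspace_dim_def by blast
  have "finite S"
    using assms(4) by (simp add: card_ge_0_finite)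
  obtain h a where h: "bij_betw h {..<7::nat} S"
      and a: "\<And>i. i < 7 \<Longrightarrow> h i = pt q (tensor_vec (a i)) \<and> theta q (proj_point (a i)) = h i"
      and det: "\<And>i j. i < 7 \<Longrightarrow> j < 7 \<Longrightarrow> i \<noteq> j \<Longrightarrow> det2 (a i) (a j) \<noteq> 0"
    using O1_enumeration[OF assms(3) \<open>finite S\<close>] unfolding assms(4) by blast
  have "tensor_vec (a i) \<in> lincomb_span (Fq q) 5 w" if "i < 7" for i
    using a[OF that] pt_self W bij_betwE[OF h] that by blast
  with det have "Fq_cross_ratio_among q a {..<7}"
    by (intro seven_points_Fq_cross_ratio) auto
  with h a det show ?thesis
    by (intro twisted_cubic_through_four_points[OF q_pos h]) auto
qed

end
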